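(* Let $\mathbb{X},\mathbb{Y}$ be real normed linear spaces and let $T\in\mathbb{B}(\mathbb{X},\mathbb{Y})$, $T\neq 0$. Then the following are equivalent: (i) $T$ is a smooth point of $\mathbb{B}(\mathbb{X},\mathbb{Y})$ (with the operator norm). (ii) For every $A\in\mathbb{B}(\mathbb{X},\mathbb{Y})$: $T\perp_B A$ if and only if for every semi-inner-product $[\cdot,\cdot]$ on $\mathbb{Y}$ compatible with the norm and every norming sequence $\{x_n\}$ for $T$, every subsequential limit of the real sequence $\{[Ax_n,Tx_n]\}$ equals $0$. *)

theory Defs
  imports "HOL-Analysis.Analysis"
begin

definition smooth_point :: "'a::real_normed_vector \<Rightarrow> bool" where
  "smooth_point x \<longleftrightarrow> x \<noteq> 0 \<and>
     (\<exists>!f :: 'a \<Rightarrow>\<^sub>L real. norm f = 1 \<and> blinfun_apply f x = norm x)"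

definition bj_orth :: "'a::real_normed_vector \<Rightarrow> 'a \<Rightarrow> bool" where
  "bj_orth x y \<longleftrightarrow> (\<forall>t::real. norm x \<le> norm (x + t *\<^sub>R y))"

definition is_sip :: "('b::real_normed_vector \<Rightarrow> 'b \<Rightarrow> real) \<Rightarrow> bool" where
  "is_sip s \<longleftrightarrow>
     (\<forall>x y z. s (x + y) z = s x z + s y z) \<and>
     (\<forall>(a::real) x y. s (a *\<^sub>R x) y = a * s x y) \<and>
     (\<forall>(a::real) x y. s x (a *\<^sub>R y) = a * s x y) \<and>
     (\<forall>x. s x x = (norm x)\<^sup>2) \<and>
     (\<forall>x y. (s x y)\<^sup>2 \<le> s x x * s y y)"

definition norming_seq :: "('a::real_normed_vector \<Rightarrow>\<^sub>L 'b::real_normed_vector) \<Rightarrow> (nat \<Rightarrow> 'a) \<Rightarrow> bool" where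
  "norming_seq T xs \<longleftrightarrow> (\<forall>n. norm (xs n) = 1) \<and>
     (\<lambda>n. norm (blinfun_apply T (xs n))) \<longlonglongrightarrow> norm T"

definition subseq_limit :: "(nat \<Rightarrow> real) \<Rightarrow> real \<Rightarrow> bool" where
  "subseq_limit a L \<longleftrightarrow> (\<exists>r. strict_mono r \<and> (a \<circ> r) \<longlonglongrightarrow> L)"

end

theory Submission
  imports Defs
begin

text \<open>A Hahn--Banach argument shows that a vector \<open>x \<noteq> 0\<close> has a norm-one functional
  \<open>f\<close> with \<open>f x = \<parallel>x\<parallel>\<close> and \<open>f y = \<beta>\<close> exactly when \<open>\<parallel>x\<parallel> + t\<beta> \<le> \<parallel>x + ty\<parallel>\<close> for all \<open>t\<close>;
  in particular \<open>x\<close> is Birkhoff--James orthogonal to \<open>y\<close> iff some support functional of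
  \<open>x\<close> vanishes at \<open>y\<close>.

  For a semi-inner-product \<open>s\<close>, a norming sequence \<open>x\<^sub>n\<close> of \<open>T\<close> and a subsequential limit \<open>L\<close>
  of \<open>s (A x\<^sub>n) (T x\<^sub>n)\<close>, passing to the limit in
  \<open>\<parallel>T x\<^sub>n\<parallel>\<^sup>2 + t s (A x\<^sub>n) (T x\<^sub>n) = s ((T + tA) x\<^sub>n) (T x\<^sub>n) \<le> \<parallel>T + tA\<parallel> \<parallel>T x\<^sub>n\<parallel>\<close>
  gives \<open>\<parallel>T\<parallel> + tL/\<parallel>T\<parallel> \<le> \<parallel>T + tA\<parallel>\<close>, i.e. a support functional of \<open>T\<close> with value \<open>L/\<parallel>T\<parallel>\<close> at \<open>A\<close>.
  If \<open>T\<close> is smooth, its unique support functional \<open>F\<close> therefore satisfies \<open>F A = L/\<parallel>T\<parallel>\<close> for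
  every such limit, while \<open>T \<bottom>\<^sub>B A\<close> iff \<open>F A = 0\<close>. If \<open>T\<close> has two support functionals
  \<open>f \<noteq> g\<close>, correcting some operator by multiples of \<open>T\<close> yields \<open>B\<close> with \<open>T \<bottom>\<^sub>B B\<close> and
  \<open>T \<bottom>\<^sub>B B + cT\<close>, \<open>c \<noteq> 0\<close>; but the limits for \<open>B + cT\<close> are those for \<open>B\<close> shifted by
  \<open>c\<parallel>T\<parallel>\<^sup>2\<close>, so they cannot all vanish for both.\<close>

section \<open>Hahn--Banach for sublinear functionals\<close>

text \<open>Partial linear functionals dominated by \<open>p\<close> are represented by their graphs, so that
  Zorn's lemma can be applied to set inclusion.\<close>

definition dominated_graph :: "('v::real_vector \<Rightarrow> real) \<Rightarrow> ('v \<times> real) set \<Rightarrow> bool" where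
  "dominated_graph p G \<longleftrightarrow> subspace G \<and> (\<forall>(x, a) \<in> G. a \<le> p x)"

lemma dominated_graph_Union_chain:
  assumes "C \<noteq> {}" "C \<in> chains {G. dominated_graph p G}"
  shows "dominated_graph p (\<Union>C)"
proof -
  have dom: "\<And>G. G \<in> C \<Longrightarrow> dominated_graph p G"
    and chain: "\<And>A B. A \<in> C \<Longrightarrow> B \<in> C \<Longrightarrow> A \<subseteq> B \<or> B \<subseteq> A"
    using assms(2) unfolding chains_def chain_subset_def by auto
  have "subspace (\<Union>C)"
  proof (rule subspaceI)
    show "0 \<in> \<Union>C" using assms(1) dom unfolding dominated_graph_def by (auto dest: subspace_0)
  next
    fix u v assume "u \<in> \<Union>C" "v \<in> \<Union>C"
    then obtain A B where "A \<in> C" "B \<in> C" "u \<in> A" "v \<in> B" by auto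
    with chain[of A B] dom[of A] dom[of B] show "u + v \<in> \<Union>C"
      unfolding dominated_graph_def by (metis UnionI subsetD subspace_add)
  next
    fix c u assume "u \<in> \<Union>C"
    with dom show "c *\<^sub>R u \<in> \<Union>C" unfolding dominated_graph_def by (auto dest: subspace_scale)
  qed
  with dom show ?thesis unfolding dominated_graph_def by fast
qed

lemma dominated_graph_functional:
  assumes "dominated_graph p G" "p 0 = 0" "(x, a) \<in> G" "(x, b) \<in> G"
  shows "a = b"
proof -
  have "(x, a) - (x, b) \<in> G" "(x, b) - (x, a) \<in> G"
    using assms(1,3,4) unfolding dominated_graph_def by (metis subspace_diff)+
  then have "a - b \<le> p 0" "b - a \<le> p 0"
    using assms(1) unfolding dominated_graph_def by auto
  with assms(2) show ?thesis by linarith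
qed

lemma span_insert_subspace:
  assumes "subspace G" "v \<in> span (insert a G)"
  obtains g k where "g \<in> G" "v = g + k *\<^sub>R a"
proof -
  from assms(2) obtain k where "v - k *\<^sub>R a \<in> span G"
    unfolding span_insert by blast
  with assms(1) have "v - k *\<^sub>R a \<in> G" by (metis span_eq_iff)
  then show thesis by (intro that[of "v - k *\<^sub>R a" k]) auto
qed

lemma dominated_graph_extension_value:
  fixes p :: "'v::real_vector \<Rightarrow> real"
  assumes subadd: "\<And>x y. p (x + y) \<le> p x + p y" and G: "dominated_graph p G"
  obtains c where "\<And>y b. (y, b) \<in> G \<Longrightarrow> b - p (y - x0) \<le> c"
    and "\<And>y b. (y, b) \<in> G \<Longrightarrow> c \<le> p (y + x0) - b"
proof -
  have sub: "subspace G" and dom: "\<And>y b. (y, b) \<in> G \<Longrightarrow> b \<le> p y"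
    using G unfolding dominated_graph_def by auto
  have gap: "b1 - p (y1 - x0) \<le> p (y2 + x0) - b2" if "(y1, b1) \<in> G" "(y2, b2) \<in> G" for y1 b1 y2 b2
  proof -
    have "b1 + b2 \<le> p (y1 + y2)" using dom subspace_add[OF sub that] by simp
    also have "\<dots> \<le> p (y1 - x0) + p (y2 + x0)" using subadd[of "y1 - x0" "y2 + x0"] by simp
    finally show ?thesis by linarith
  qed
  define S where "S = {b - p (y - x0) | y b. (y, b) \<in> G}"
  have "(0, 0) \<in> G" using subspace_0[OF sub] by (simp add: zero_prod_def)
  then have S_ne: "S \<noteq> {}" and S_bdd: "bdd_above S"
    unfolding S_def bdd_above_def using gap by blast+
  show thesis
  proof (rule that[of "Sup S"])
    show "b - p (y - x0) \<le> Sup S" if "(y, b) \<in> G" for y b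
      using that S_def by (intro cSup_upper[OF _ S_bdd]) blast
    show "Sup S \<le> p (y + x0) - b" if "(y, b) \<in> G" for y b
      using that gap S_def by (intro cSup_least[OF S_ne]) blast
  qed
qed

lemma dominated_graph_extend:
  fixes p :: "'v::real_vector \<Rightarrow> real"
  assumes subadd: "\<And>x y. p (x + y) \<le> p x + p y"
    and pos_hom: "\<And>c x. 0 < c \<Longrightarrow> p (c *\<^sub>R x) = c * p x"
    and G: "dominated_graph p G"
  obtains c where "dominated_graph p (span (insert (x0, c) G))"
proof -
  have sub: "subspace G" and dom: "\<And>y b. (y, b) \<in> G \<Longrightarrow> b \<le> p y"
    using G unfolding dominated_graph_def by auto
  obtain c where c_lower: "\<And>y b. (y, b) \<in> G \<Longrightarrow> b - p (y - x0) \<le> c"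
    and c_upper: "\<And>y b. (y, b) \<in> G \<Longrightarrow> c \<le> p (y + x0) - b"
    using dominated_graph_extension_value[OF subadd G] by blast
  have scaled: "((1 / u) *\<^sub>R y, b / u) \<in> G" if "(y, b) \<in> G" for y b u
    using subspace_scale[OF sub that, of "1 / u"] by simp
  have dom_extended: "b + t * c \<le> p (y + t *\<^sub>R x0)" if yb: "(y, b) \<in> G" for y b t
  proof (cases t "0::real" rule: linorder_cases)
    case less
    define u where "u = - t"
    have u: "0 < u" "y + t *\<^sub>R x0 = u *\<^sub>R ((1 / u) *\<^sub>R y - x0)"
      using less by (auto simp: u_def algebra_simps)
    have "u * (b / u - p ((1 / u) *\<^sub>R y - x0)) \<le> u * c"
      using c_lower[OF scaled[OF yb]] u(1) by (intro mult_left_mono) auto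
    moreover have "p (y + t *\<^sub>R x0) = u * p ((1 / u) *\<^sub>R y - x0)" using u by (simp add: pos_hom)
    ultimately show ?thesis using u(1) by (simp add: u_def algebra_simps)
  next
    case equal
    with dom yb show ?thesis by simp
  next
    case greater
    have t: "y + t *\<^sub>R x0 = t *\<^sub>R ((1 / t) *\<^sub>R y + x0)" using greater by (simp add: algebra_simps)
    have "t * c \<le> t * (p ((1 / t) *\<^sub>R y + x0) - b / t)"
      using c_upper[OF scaled[OF yb]] greater by (intro mult_left_mono) auto
    moreover have "p (y + t *\<^sub>R x0) = t * p ((1 / t) *\<^sub>R y + x0)" using t greater by (simp add: pos_hom)
    ultimately show ?thesis using greater by (simp add: algebra_simps)
  qed
  have "dominated_graph p (span (insert (x0, c) G))"
    unfolding dominated_graph_def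
  proof (intro conjI subspace_span ballI)
    fix v assume "v \<in> span (insert (x0, c) G)"
    then obtain y b k where "(y, b) \<in> G" "v = (y, b) + k *\<^sub>R (x0, c)"
      using span_insert_subspace[OF sub] by (metis surj_pair)
    then show "case v of (x, a) \<Rightarrow> a \<le> p x"
      using dom_extended by auto
  qed
  then show thesis by (rule that)
qed

theorem hahn_banach_sublinear:
  fixes p :: "'v::real_vector \<Rightarrow> real"
  assumes subadd: "\<And>x y. p (x + y) \<le> p x + p y"
    and pos_hom: "\<And>c x. 0 < c \<Longrightarrow> p (c *\<^sub>R x) = c * p x"
    and G0: "dominated_graph p G0"
  obtains g where "linear g" "\<And>x. g x \<le> p x" "\<And>x a. (x, a) \<in> G0 \<Longrightarrow> g x = a"
proof -
  have p0: "p 0 = 0" using pos_hom[of 2 0] by simp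
  define Z where "Z = {G. G0 \<subseteq> G \<and> dominated_graph p G}"
  have chain_bound: "\<exists>U\<in>Z. \<forall>G\<in>C. G \<subseteq> U" if "C \<in> chains Z" for C
  proof (cases "C = {}")
    case True
    have "G0 \<in> Z" using G0 unfolding Z_def by simp
    with True show ?thesis by blast
  next
    case False
    have chain: "C \<in> chains {G. dominated_graph p G}" and G0C: "\<And>G. G \<in> C \<Longrightarrow> G0 \<subseteq> G"
      using that unfolding Z_def chains_def chain_subset_def by auto
    have "dominated_graph p (\<Union>C)" by (rule dominated_graph_Union_chain[OF False chain])
    moreover have "G0 \<subseteq> \<Union>C" using False G0C by blast
    ultimately have "\<Union>C \<in> Z" unfolding Z_def by simp
    then show ?thesis by blast
  qed
  have "\<exists>M\<in>Z. \<forall>G\<in>Z. M \<subseteq> G \<longrightarrow> G = M"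
    by (rule Zorn_Lemma2) (use chain_bound in blast)
  then obtain M where M_Z: "M \<in> Z" and M_max: "\<And>G. G \<in> Z \<Longrightarrow> M \<subseteq> G \<Longrightarrow> G = M"
    by blast
  from M_Z have G0M: "G0 \<subseteq> M" and M: "dominated_graph p M" unfolding Z_def by auto
  have total: "\<exists>a. (x, a) \<in> M" for x
  proof -
    obtain c where "dominated_graph p (span (insert (x, c) M))"
      using dominated_graph_extend[OF subadd pos_hom M] .
    moreover have "M \<subseteq> span (insert (x, c) M)"
      by (meson span_superset subset_insertI subset_trans)
    ultimately have "span (insert (x, c) M) = M"
      using G0M by (intro M_max) (auto simp: Z_def)
    then have "(x, c) \<in> M" using span_base[of "(x, c)" "insert (x, c) M"] by simp
    then show ?thesis ..
  qed
  define g where "g x = (THE a. (x, a) \<in> M)" for x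
  have g_eq: "g x = a" if "(x, a) \<in> M" for x a
    unfolding g_def by (rule the_equality) (use that dominated_graph_functional[OF M p0] in auto)
  have g_mem: "(x, g x) \<in> M" for x
    using total[of x] g_eq by auto
  have sub: "subspace M" and dom: "\<And>x a. (x, a) \<in> M \<Longrightarrow> a \<le> p x"
    using M unfolding dominated_graph_def by auto
  have "linear g"
  proof (rule linearI)
    fix x y show "g (x + y) = g x + g y"
      using subspace_add[OF sub g_mem g_mem] g_eq by simp
  next
    fix c x show "g (c *\<^sub>R x) = c *\<^sub>R g x"
      using subspace_scale[OF sub g_mem, of c] g_eq by simp
  qed
  moreover have "g x \<le> p x" for x using dom[OF g_mem] .
  moreover have "g x = a" if "(x, a) \<in> G0" for x a using G0M g_eq that by blast
  ultimately show thesis by (rule that)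
qed

section \<open>Support functionals and Birkhoff--James orthogonality\<close>

lemma norm_linear_combination_ge:
  fixes x y :: "'a::real_normed_vector"
  assumes H: "\<And>t. norm x + t * \<beta> \<le> norm (x + t *\<^sub>R y)"
  shows "a * norm x + b * \<beta> \<le> norm (a *\<^sub>R x + b *\<^sub>R y)"
proof (cases "a > 0")
  case True
  have "a * norm x + b * \<beta> = a * (norm x + (b / a) * \<beta>)" using True by (simp add: field_simps)
  also have "\<dots> \<le> a * norm (x + (b / a) *\<^sub>R y)" using H[of "b / a"] True by (intro mult_left_mono) auto
  also have "\<dots> = norm (a *\<^sub>R (x + (b / a) *\<^sub>R y))" using True by simp
  also have "a *\<^sub>R (x + (b / a) *\<^sub>R y) = a *\<^sub>R x + b *\<^sub>R y"
    using True by (simp add: scaleR_add_right)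
  finally show ?thesis .
next
  case False
  have \<beta>: "\<bar>\<beta>\<bar> \<le> norm y"
    using H[of 1] H[of "-1"] norm_triangle_ineq[of x y] norm_triangle_ineq4[of x y] by simp
  have "b * \<beta> \<le> \<bar>b\<bar> * norm y"
    using mult_left_mono[OF \<beta> abs_ge_zero[of b]] abs_ge_self[of "b * \<beta>"] by (simp add: abs_mult)
  moreover have "norm (b *\<^sub>R y) \<le> norm (a *\<^sub>R x + b *\<^sub>R y) + \<bar>a\<bar> * norm x"
    using norm_triangle_ineq4[of "a *\<^sub>R x + b *\<^sub>R y" "a *\<^sub>R x"] by simp
  ultimately show ?thesis using False by simp
qed

lemma norm_dominated_functional:
  fixes x y :: "'a::real_normed_vector"
  assumes H: "\<And>t. norm x + t * \<beta> \<le> norm (x + t *\<^sub>R y)"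
  obtains f :: "'a \<Rightarrow>\<^sub>L real"
  where "norm f \<le> 1" "blinfun_apply f x = norm x" "blinfun_apply f y = \<beta>"
proof -
  define G0 where "G0 = span {(x, norm x), (y, \<beta>)}"
  have G0: "dominated_graph norm G0"
    unfolding dominated_graph_def
  proof (intro conjI ballI)
    show "subspace G0" unfolding G0_def by simp
  next
    fix w assume "w \<in> G0"
    then obtain a b where "w - a *\<^sub>R (x, norm x) = b *\<^sub>R (y, \<beta>)"
      unfolding G0_def span_insert[of _ "{_}"] span_singleton by blast
    then have "w = a *\<^sub>R (x, norm x) + b *\<^sub>R (y, \<beta>)"
      by (simp add: diff_eq_eq add.commute)
    then show "case w of (u, c) \<Rightarrow> c \<le> norm u" using norm_linear_combination_ge[OF H] by simp
  qed
  have norm_pos_hom: "norm (c *\<^sub>R u) = c * norm u" if "0 < c" for c and u :: 'a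
    using that by simp
  obtain g where g: "linear g" "\<And>u. g u \<le> norm u" "\<And>u c. (u, c) \<in> G0 \<Longrightarrow> g u = c"
    using hahn_banach_sublinear[OF norm_triangle_ineq norm_pos_hom G0] by blast
  have g_bound: "\<bar>g u\<bar> \<le> norm u" for u
    using g(2)[of u] g(2)[of "-u"] linear_neg[OF g(1)] by simp
  have "bounded_linear g"
    using g(1) g_bound by (intro bounded_linear_intro[where K = 1]) (auto simp: linear_add linear_scale)
  then have f_apply: "blinfun_apply (Blinfun g) = g" by (rule bounded_linear_Blinfun_apply)
  show thesis
  proof (rule that[of "Blinfun g"])
    show "norm (Blinfun g) \<le> 1" by (rule norm_blinfun_bound) (use g_bound f_apply in auto)
    show "Blinfun g x = norm x" "Blinfun g y = \<beta>"
      using g(3)[of x "norm x"] g(3)[of y \<beta>] f_apply unfolding G0_def by (auto intro: span_base)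
  qed
qed

definition support_functional :: "'a::real_normed_vector \<Rightarrow> ('a \<Rightarrow>\<^sub>L real) \<Rightarrow> bool" where
  "support_functional x f \<longleftrightarrow> norm f = 1 \<and> blinfun_apply f x = norm x"

lemma smooth_point_iff_unique_support_functional:
  "smooth_point x \<longleftrightarrow> x \<noteq> 0 \<and> (\<exists>!f. support_functional x f)"
  unfolding smooth_point_def support_functional_def ..

lemma support_functional_norm_le:
  assumes "norm f \<le> 1" "blinfun_apply f x = norm x" "x \<noteq> 0"
  shows "support_functional x f"
proof -
  have "norm x \<le> norm f * norm x" using norm_blinfun[of f x] assms(2) by simp
  with assms show ?thesis unfolding support_functional_def by simp
qed

lemma support_functional_value_iff:
  assumes "x \<noteq> 0"
  shows "(\<exists>f. support_functional x f \<and> blinfun_apply f y = \<beta>) \<longleftrightarrow> (\<forall>t. norm x + t * \<beta> \<le> norm (x + t *\<^sub>R y))"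
proof
  assume "\<exists>f. support_functional x f \<and> blinfun_apply f y = \<beta>"
  then obtain f where f: "norm f = 1" "blinfun_apply f x = norm x" "blinfun_apply f y = \<beta>"
    unfolding support_functional_def by blast
  show "\<forall>t. norm x + t * \<beta> \<le> norm (x + t *\<^sub>R y)"
  proof
    fix t
    have "norm x + t * \<beta> = blinfun_apply f (x + t *\<^sub>R y)" using f by (simp add: blinfun.add_right blinfun.scaleR_right)
    also have "\<dots> \<le> norm (x + t *\<^sub>R y)" using norm_blinfun[of f "x + t *\<^sub>R y"] f(1) by simp
    finally show "norm x + t * \<beta> \<le> norm (x + t *\<^sub>R y)" .
  qed
next
  assume "\<forall>t. norm x + t * \<beta> \<le> norm (x + t *\<^sub>R y)"
  then obtain f where "norm f \<le> 1" "blinfun_apply f x = norm x" "blinfun_apply f y = \<beta>"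
    using norm_dominated_functional by blast
  with assms show "\<exists>f. support_functional x f \<and> blinfun_apply f y = \<beta>"
    using support_functional_norm_le by blast
qed

lemma support_functional_exists:
  assumes "x \<noteq> 0"
  obtains f where "support_functional x f"
  using support_functional_value_iff[OF assms, of 0 0] by auto

lemma bj_orth_iff_support_functional:
  assumes "x \<noteq> 0"
  shows "bj_orth x y \<longleftrightarrow> (\<exists>f. support_functional x f \<and> blinfun_apply f y = 0)"
  unfolding bj_orth_def support_functional_value_iff[OF assms] by simp

lemma bj_orth_shift_if_support_functionals_differ:
  assumes "x \<noteq> 0" "support_functional x f" "support_functional x g" "f \<noteq> g"
  obtains y c where "bj_orth x y" "bj_orth x (y + c *\<^sub>R x)" "c \<noteq> 0"
proof -
  have nx: "0 < norm x" using assms(1) by simp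
  have fx: "blinfun_apply f x = norm x" and gx: "blinfun_apply g x = norm x"
    using assms(2,3) unfolding support_functional_def by auto
  obtain z where z: "blinfun_apply f z \<noteq> blinfun_apply g z"
    using assms(4) blinfun_eqI by blast
  define y where "y = z - (blinfun_apply f z / norm x) *\<^sub>R x"
  define c where "c = (blinfun_apply f z - blinfun_apply g z) / norm x"
  have "blinfun_apply f y = 0"
    unfolding y_def using fx nx by (simp add: blinfun.diff_right blinfun.scaleR_right)
  then have "bj_orth x y" using bj_orth_iff_support_functional[OF assms(1)] assms(2) by blast
  moreover have "blinfun_apply g (y + c *\<^sub>R x) = 0"
    unfolding y_def c_def using gx nx
    by (simp add: blinfun.add_right blinfun.diff_right blinfun.scaleR_right field_simps)
  then have "bj_orth x (y + c *\<^sub>R x)" using bj_orth_iff_support_functional[OF assms(1)] assms(3) by blast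
  moreover have "c \<noteq> 0" unfolding c_def using z nx by simp
  ultimately show thesis by (rule that)
qed

section \<open>Semi-inner-products and norming sequences\<close>

lemma is_sip_abs_le:
  assumes "is_sip s"
  shows "\<bar>s x y\<bar> \<le> norm x * norm y"
proof -
  have "(s x y)\<^sup>2 \<le> s x x * s y y" "s x x = (norm x)\<^sup>2" "s y y = (norm y)\<^sup>2"
    using assms unfolding is_sip_def by blast+
  then have "(s x y)\<^sup>2 \<le> (norm x * norm y)\<^sup>2" by (simp add: power_mult_distrib)
  then show ?thesis using abs_le_square_iff[of "s x y" "norm x * norm y"] by simp
qed

lemma is_sip_self:
  assumes "is_sip s"
  shows "s x x = (norm x)\<^sup>2"
  using assms unfolding is_sip_def by simp

lemma is_sip_add_scaleR:
  assumes "is_sip s"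
  shows "s (x + t *\<^sub>R y) z = s x z + t * s y z"
  using assms unfolding is_sip_def by simp

lemma line_representative_exists:
  obtains rep :: "'v::real_vector \<Rightarrow> 'v"
  where "\<And>y. \<exists>k. k \<noteq> 0 \<and> rep y = k *\<^sub>R y" and "\<And>a y. a \<noteq> 0 \<Longrightarrow> rep (a *\<^sub>R y) = rep y"
proof
  define line where "line y = {c *\<^sub>R y | c. c \<noteq> 0}" for y :: 'v
  show "\<exists>k. k \<noteq> 0 \<and> (SOME z. z \<in> line y) = k *\<^sub>R y" for y
  proof -
    have "y \<in> line y" unfolding line_def by (rule CollectI, rule exI[of _ 1]) simp
    then have "(SOME z. z \<in> line y) \<in> line y" by (rule someI)
    then show ?thesis unfolding line_def by blast
  qed
  have "line (a *\<^sub>R y) = line y" if "a \<noteq> 0" for a y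
  proof
    show "line (a *\<^sub>R y) \<subseteq> line y" using that unfolding line_def by auto
    show "line y \<subseteq> line (a *\<^sub>R y)"
    proof
      fix z assume "z \<in> line y"
      then obtain c where "c \<noteq> 0" "z = c *\<^sub>R y" unfolding line_def by blast
      with that have "z = (c / a) *\<^sub>R (a *\<^sub>R y)" "c / a \<noteq> 0" by simp_all
      then show "z \<in> line (a *\<^sub>R y)" unfolding line_def by blast
    qed
  qed
  then show "(SOME z. z \<in> line (a *\<^sub>R y)) = (SOME z. z \<in> line y)" if "a \<noteq> 0" for a y
    using that by simp
qed

text \<open>\<open>s x y = f\<^sub>y y * f\<^sub>y x\<close>, where \<open>f\<^sub>y\<close> norms the chosen representative of the line
  through \<open>y\<close>; choosing \<open>f\<^sub>y\<close> per line rather than per vector makes \<open>s\<close> homogeneous in \<open>y\<close>.\<close>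

lemma is_sip_exists: "\<exists>s :: 'b::real_normed_vector \<Rightarrow> 'b \<Rightarrow> real. is_sip s"
proof -
  obtain rep :: "'b \<Rightarrow> 'b" where rep: "\<And>y. \<exists>k. k \<noteq> 0 \<and> rep y = k *\<^sub>R y"
    and rep_scaleR: "\<And>a y. a \<noteq> 0 \<Longrightarrow> rep (a *\<^sub>R y) = rep y"
    using line_representative_exists by blast
  define F where "F y = (SOME f :: 'b \<Rightarrow>\<^sub>L real. norm f \<le> 1 \<and> blinfun_apply f (rep y) = norm (rep y))" for y
  have F: "norm (F y) \<le> 1" "blinfun_apply (F y) (rep y) = norm (rep y)" for y
  proof -
    obtain f :: "'b \<Rightarrow>\<^sub>L real" where "norm f \<le> 1" "blinfun_apply f (rep y) = norm (rep y)"
      using norm_dominated_functional[of "rep y" 0 0] by auto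
    then show "norm (F y) \<le> 1" "blinfun_apply (F y) (rep y) = norm (rep y)"
      unfolding F_def by (metis (mono_tags, lifting) someI)+
  qed
  have F_scaleR: "F (a *\<^sub>R y) = F y" if "a \<noteq> 0" for a y
    unfolding F_def rep_scaleR[OF that] ..
  have F_self: "(blinfun_apply (F y) y)\<^sup>2 = (norm y)\<^sup>2" for y
  proof -
    obtain k where k: "k \<noteq> 0" "rep y = k *\<^sub>R y" using rep by blast
    then have "k * blinfun_apply (F y) y = \<bar>k\<bar> * norm y" using F(2)[of y] by (simp add: blinfun.scaleR_right)
    then have "k\<^sup>2 * (blinfun_apply (F y) y)\<^sup>2 = k\<^sup>2 * (norm y)\<^sup>2" by (metis power2_abs power_mult_distrib)
    with k show ?thesis by simp
  qed
  have F_bound: "\<bar>blinfun_apply (F y) x\<bar> \<le> norm x" for x y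
    using norm_blinfun[of "F y" x] F(1)[of y] mult_right_mono[of _ 1 "norm x"] by fastforce
  define s where "s x y = blinfun_apply (F y) y * blinfun_apply (F y) x" for x y
  have "is_sip s"
    unfolding is_sip_def
  proof (intro conjI allI)
    fix x y z show "s (x + y) z = s x z + s y z"
      unfolding s_def by (simp add: blinfun.add_right algebra_simps)
  next
    fix a :: real and x y show "s (a *\<^sub>R x) y = a * s x y"
      unfolding s_def by (simp add: blinfun.scaleR_right)
  next
    fix a :: real and x y show "s x (a *\<^sub>R y) = a * s x y"
      by (cases "a = 0") (simp_all add: s_def F_scaleR blinfun.scaleR_right)
  next
    fix x show "s x x = (norm x)\<^sup>2"
      unfolding s_def using F_self[of x] by (simp add: power2_eq_square)
  next
    fix x y
    have "(s x y)\<^sup>2 = (norm y)\<^sup>2 * (blinfun_apply (F y) x)\<^sup>2"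
      unfolding s_def using F_self[of y] by (simp add: power_mult_distrib)
    also have "\<dots> \<le> (norm y)\<^sup>2 * (norm x)\<^sup>2"
      using F_bound[of y x] abs_le_square_iff[of "blinfun_apply (F y) x" "norm x"]
      by (intro mult_left_mono) auto
    also have "\<dots> = s x x * s y y"
      unfolding s_def using F_self[of x] F_self[of y] by (simp add: power2_eq_square)
    finally show "(s x y)\<^sup>2 \<le> s x x * s y y" .
  qed
  then show ?thesis by blast
qed

lemma norming_seq_exists:
  fixes T :: "'a::real_normed_vector \<Rightarrow>\<^sub>L 'b::real_normed_vector"
  assumes "T \<noteq> 0"
  obtains xs where "norming_seq T xs"
proof -
  have nT: "0 < norm T" using assms by simp
  have "\<exists>x. norm x = 1 \<and> norm T - norm T / Suc n < norm (blinfun_apply T x)" for n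
  proof (rule ccontr)
    define K where "K = norm T - norm T / Suc n"
    assume "\<nexists>x. norm x = 1 \<and> norm T - norm T / Suc n < norm (blinfun_apply T x)"
    then have K_bound: "norm (blinfun_apply T x) \<le> K" if "norm x = 1" for x
      using that unfolding K_def by force
    have "norm T \<le> K"
    proof (rule norm_blinfun_bound)
      show "0 \<le> K" unfolding K_def using nT by (simp add: field_simps)
      show "norm (blinfun_apply T x) \<le> K * norm x" for x
      proof (cases "x = 0")
        case False
        then have "norm (blinfun_apply T (x /\<^sub>R norm x)) \<le> K" by (intro K_bound) simp
        with False show ?thesis by (simp add: blinfun.scaleR_right field_simps)
      qed simp
    qed
    moreover have "K < norm T" unfolding K_def using nT by simp
    ultimately show False by simp
  qed
  then obtain xs where unit: "\<And>n. norm (xs n) = 1"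
    and lower: "\<And>n. norm T - norm T / Suc n < norm (blinfun_apply T (xs n))" by metis
  have upper: "norm (blinfun_apply T (xs n)) \<le> norm T" for n
    using norm_blinfun[of T "xs n"] unit by simp
  have "(\<lambda>n. norm T - norm T / Suc n) \<longlonglongrightarrow> norm T"
    using tendsto_diff[OF tendsto_const LIMSEQ_Suc[OF lim_const_over_n[of "norm T"]]] by simp
  then have "(\<lambda>n. norm (blinfun_apply T (xs n))) \<longlonglongrightarrow> norm T"
    by (rule tendsto_sandwich[rotated 2, OF _ tendsto_const])
      (use lower upper less_imp_le in \<open>auto intro!: always_eventually\<close>)
  with unit show thesis by (intro that[of xs]) (simp add: norming_seq_def)
qed

lemma subseq_limit_exists:
  assumes "is_sip s" "norming_seq T xs"
  obtains L where "subseq_limit (\<lambda>n. s (blinfun_apply A (xs n)) (blinfun_apply T (xs n))) L"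
proof -
  have "\<bar>s (blinfun_apply A (xs n)) (blinfun_apply T (xs n))\<bar> \<le> norm A * norm T" for n
  proof -
    have "\<bar>s (blinfun_apply A (xs n)) (blinfun_apply T (xs n))\<bar>
        \<le> norm (blinfun_apply A (xs n)) * norm (blinfun_apply T (xs n))"
      by (rule is_sip_abs_le[OF assms(1)])
    also have "\<dots> \<le> norm A * norm T"
      using norm_blinfun[of A "xs n"] norm_blinfun[of T "xs n"] assms(2)
      unfolding norming_seq_def by (intro mult_mono) auto
    finally show ?thesis .
  qed
  then have "bounded (range (\<lambda>n. s (blinfun_apply A (xs n)) (blinfun_apply T (xs n))))"
    unfolding bounded_iff real_norm_def by blast
  then show thesis
    using bounded_imp_convergent_subsequence that unfolding subseq_limit_def by blast
qed

lemma subseq_limit_add_tendsto: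
  assumes "subseq_limit a L" "b \<longlonglongrightarrow> M"
  shows "subseq_limit (\<lambda>n. a n + b n) (L + M)"
proof -
  obtain r where r: "strict_mono r" and a: "(a \<circ> r) \<longlonglongrightarrow> L"
    using assms(1) unfolding subseq_limit_def by blast
  have "(b \<circ> r) \<longlonglongrightarrow> M" using LIMSEQ_subseq_LIMSEQ[OF assms(2) r] .
  with a have "((\<lambda>n. a n + b n) \<circ> r) \<longlonglongrightarrow> L + M" unfolding o_def by (rule tendsto_add)
  with r show ?thesis unfolding subseq_limit_def by blast
qed

lemma subseq_limit_sip_le:
  assumes sip: "is_sip s" and xs: "norming_seq T xs"
    and L: "subseq_limit (\<lambda>n. s (blinfun_apply A (xs n)) (blinfun_apply T (xs n))) L"
  shows "(norm T)\<^sup>2 + t * L \<le> norm (T + t *\<^sub>R A) * norm T"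
proof -
  obtain r where r: "strict_mono r"
    and lim: "(\<lambda>n. s (blinfun_apply A (xs (r n))) (blinfun_apply T (xs (r n)))) \<longlonglongrightarrow> L"
    using L unfolding subseq_limit_def o_def by blast
  have Txs: "(\<lambda>n. norm (blinfun_apply T (xs (r n)))) \<longlonglongrightarrow> norm T"
    using LIMSEQ_subseq_LIMSEQ[OF _ r] xs unfolding norming_seq_def o_def by blast
  have pointwise: "(norm (blinfun_apply T x))\<^sup>2 + t * s (blinfun_apply A x) (blinfun_apply T x)
      \<le> norm (T + t *\<^sub>R A) * norm (blinfun_apply T x)" if "norm x = 1" for x
  proof -
    have "(norm (blinfun_apply T x))\<^sup>2 + t * s (blinfun_apply A x) (blinfun_apply T x)
        = s (blinfun_apply (T + t *\<^sub>R A) x) (blinfun_apply T x)"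
      by (simp add: is_sip_add_scaleR[OF sip] is_sip_self[OF sip] blinfun.add_left blinfun.scaleR_left)
    also have "\<dots> \<le> norm (blinfun_apply (T + t *\<^sub>R A) x) * norm (blinfun_apply T x)"
      using is_sip_abs_le[OF sip] abs_le_D1 by blast
    also have "\<dots> \<le> norm (T + t *\<^sub>R A) * norm (blinfun_apply T x)"
      using norm_blinfun[of "T + t *\<^sub>R A" x] that by (intro mult_right_mono) auto
    finally show ?thesis .
  qed
  have "(\<lambda>n. (norm (blinfun_apply T (xs (r n))))\<^sup>2
      + t * s (blinfun_apply A (xs (r n))) (blinfun_apply T (xs (r n)))) \<longlonglongrightarrow> (norm T)\<^sup>2 + t * L"
    by (intro tendsto_intros lim Txs)
  moreover have "(\<lambda>n. norm (T + t *\<^sub>R A) * norm (blinfun_apply T (xs (r n))))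
      \<longlonglongrightarrow> norm (T + t *\<^sub>R A) * norm T"
    by (intro tendsto_intros Txs)
  ultimately show ?thesis
    using pointwise xs unfolding norming_seq_def by (intro LIMSEQ_le) auto
qed

lemma subseq_limit_sip_support_functional:
  assumes "T \<noteq> 0" "is_sip s" "norming_seq T xs"
    and "subseq_limit (\<lambda>n. s (blinfun_apply A (xs n)) (blinfun_apply T (xs n))) L"
  obtains f where "support_functional T f" "blinfun_apply f A = L / norm T"
proof -
  have nT: "0 < norm T" using assms(1) by simp
  have "norm T + t * (L / norm T) \<le> norm (T + t *\<^sub>R A)" for t
  proof -
    have "(norm T + t * (L / norm T)) * norm T = (norm T)\<^sup>2 + t * L"
      using nT by (simp add: field_simps power2_eq_square)
    also have "\<dots> \<le> norm (T + t *\<^sub>R A) * norm T" by (rule subseq_limit_sip_le[OF assms(2-4)])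
    finally show ?thesis using nT by simp
  qed
  then show thesis using support_functional_value_iff[OF assms(1)] that by blast
qed

section \<open>Smooth operators\<close>

definition sip_limits_vanish :: "('a::real_normed_vector \<Rightarrow>\<^sub>L 'b::real_normed_vector) \<Rightarrow> ('a \<Rightarrow>\<^sub>L 'b) \<Rightarrow> bool" where
  "sip_limits_vanish T A \<longleftrightarrow> (\<forall>s. is_sip s \<longrightarrow> (\<forall>xs. norming_seq T xs \<longrightarrow>
     (\<forall>L. subseq_limit (\<lambda>n. s (blinfun_apply A (xs n)) (blinfun_apply T (xs n))) L \<longrightarrow> L = 0)))"

lemma sip_limits_vanish_imp_bj_orth:
  assumes "T \<noteq> 0" "sip_limits_vanish T A"
  shows "bj_orth T A"
proof -
  obtain s :: "'b \<Rightarrow> 'b \<Rightarrow> real" where s: "is_sip s" using is_sip_exists by blast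
  obtain xs where xs: "norming_seq T xs" using norming_seq_exists[OF assms(1)] .
  obtain L where L: "subseq_limit (\<lambda>n. s (blinfun_apply A (xs n)) (blinfun_apply T (xs n))) L"
    using subseq_limit_exists[OF s xs] .
  obtain f where "support_functional T f" "blinfun_apply f A = L / norm T"
    using subseq_limit_sip_support_functional[OF assms(1) s xs L] .
  moreover have "L = 0" using assms(2) s xs L unfolding sip_limits_vanish_def by blast
  ultimately show ?thesis using bj_orth_iff_support_functional[OF assms(1)] by auto
qed

lemma sip_limits_vanish_shift:
  assumes "T \<noteq> 0" "sip_limits_vanish T A" "c \<noteq> 0"
  shows "\<not> sip_limits_vanish T (A + c *\<^sub>R T)"
proof
  assume shifted: "sip_limits_vanish T (A + c *\<^sub>R T)"
  obtain s :: "'b \<Rightarrow> 'b \<Rightarrow> real" where s: "is_sip s" using is_sip_exists by blast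
  obtain xs where xs: "norming_seq T xs" using norming_seq_exists[OF assms(1)] .
  obtain L where L: "subseq_limit (\<lambda>n. s (blinfun_apply A (xs n)) (blinfun_apply T (xs n))) L"
    using subseq_limit_exists[OF s xs] .
  have "(\<lambda>n. c * (norm (blinfun_apply T (xs n)))\<^sup>2) \<longlonglongrightarrow> c * (norm T)\<^sup>2"
    using xs unfolding norming_seq_def by (intro tendsto_intros) auto
  from subseq_limit_add_tendsto[OF L this]
  have "subseq_limit (\<lambda>n. s (blinfun_apply (A + c *\<^sub>R T) (xs n)) (blinfun_apply T (xs n)))
      (L + c * (norm T)\<^sup>2)"
    by (simp add: is_sip_add_scaleR[OF s] is_sip_self[OF s] blinfun.add_left blinfun.scaleR_left)
  then have "L + c * (norm T)\<^sup>2 = 0" using shifted s xs unfolding sip_limits_vanish_def by blast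
  moreover have "L = 0" using assms(2) s xs L unfolding sip_limits_vanish_def by blast
  ultimately show False using assms(1,3) by simp
qed

lemma smooth_point_imp_bj_orth_iff_sip_limits_vanish:
  assumes "smooth_point T"
  shows "bj_orth T A \<longleftrightarrow> sip_limits_vanish T A"
proof
  have T: "T \<noteq> 0" and unique: "\<And>f g. support_functional T f \<Longrightarrow> support_functional T g \<Longrightarrow> f = g"
    using assms unfolding smooth_point_iff_unique_support_functional by auto
  assume "bj_orth T A"
  then obtain f where f: "support_functional T f" "blinfun_apply f A = 0"
    using bj_orth_iff_support_functional[OF T] by blast
  show "sip_limits_vanish T A"
    unfolding sip_limits_vanish_def
  proof (intro allI impI)
    fix s xs L
    assume "is_sip s" "norming_seq T xs"
      "subseq_limit (\<lambda>n. s (blinfun_apply A (xs n)) (blinfun_apply T (xs n))) L"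
    then obtain g where "support_functional T g" "blinfun_apply g A = L / norm T"
      using subseq_limit_sip_support_functional[OF T] by blast
    with f unique have "L / norm T = 0" by metis
    with T show "L = 0" by simp
  qed
next
  assume "sip_limits_vanish T A"
  with assms show "bj_orth T A"
    using sip_limits_vanish_imp_bj_orth unfolding smooth_point_def by blast
qed

lemma smooth_point_if_bj_orth_iff_sip_limits_vanish:
  assumes T: "T \<noteq> 0" and orth: "\<And>A. bj_orth T A \<longleftrightarrow> sip_limits_vanish T A"
  shows "smooth_point T"
proof -
  obtain f where "support_functional T f" using support_functional_exists[OF T] .
  moreover have "f = g" if fg: "support_functional T f" "support_functional T g" for f g
  proof (rule ccontr)
    assume "f \<noteq> g"
    then obtain A c where "bj_orth T A" "bj_orth T (A + c *\<^sub>R T)" "c \<noteq> 0"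
      using bj_orth_shift_if_support_functionals_differ[OF T fg] by blast
    then show False using sip_limits_vanish_shift[OF T] orth by blast
  qed
  ultimately show ?thesis using T unfolding smooth_point_iff_unique_support_functional by blast
qed

theorem theorem2p1:
  fixes T :: "'a::real_normed_vector \<Rightarrow>\<^sub>L 'b::real_normed_vector"
  assumes "T \<noteq> 0"
  shows "smooth_point T \<longleftrightarrow>
    (\<forall>A :: 'a \<Rightarrow>\<^sub>L 'b. bj_orth T A \<longleftrightarrow>
       (\<forall>s :: 'b \<Rightarrow> 'b \<Rightarrow> real. is_sip s \<longrightarrow>
          (\<forall>xs. norming_seq T xs \<longrightarrow>
             (\<forall>L. subseq_limit (\<lambda>n. s (blinfun_apply A (xs n)) (blinfun_apply T (xs n))) L \<longrightarrow> L = 0))))"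
  using smooth_point_imp_bj_orth_iff_sip_limits_vanish
    smooth_point_if_bj_orth_iff_sip_limits_vanish[OF assms]
  unfolding sip_limits_vanish_def by blast

end
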